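(* Let $m,d,d_{\mathrm{head}}$ be positive integers with $d_{\mathrm{head}}\mid d$, $h=d/d_{\mathrm{head}}$, and let $X\in\mathbb{R}^{m\times d}$, $W_{Q,r},W_{K,r},W_{V,r}\in\mathbb{R}^{d\times d_{\mathrm{head}}}$ for $r=1,\dots,h$, and $W_O\in\mathbb{R}^{d\times d}$. Define $Q_r=XW_{Q,r}$, $K_r=XW_{K,r}$, $V_r=XW_{V,r}$, $E_r=Q_rK_r^\top/\sqrt{d_{\mathrm{head}}}\in\mathbb{R}^{m\times m}$, $A_r=\mathrm{softmax}(E_r)$ (row-wise), $O_r=A_rV_r$, $O=\mathrm{Concat}(O_1,\dots,O_h)\in\mathbb{R}^{m\times d}$ (column-wise), and $f=OW_O$. Assume all entries of $f,O,E_r,Q_r,K_r,V_r$ are nonzero, and let $R(f)\in\mathbb{R}^{m\times d}$ be arbitrary. Set $\Lambda_f=R(f)/f$, $R(O_r)=\big[\tfrac12 O\odot(\Lambda_fW_O^\top)\big]_r$, $\Lambda_{O,r}=R(O_r)/O_r$, $\Phi_r=\big(A_r\odot[\Lambda_{O,r}V_r^\top]\big)/E_r$, $\Theta_{Q,r}=\Phi_rK_r$, $\Theta_{K,r}=\Phi_r^\top Q_r$, $\Theta_{V,r}=A_r^\top\Lambda_{O,r}$, and $\alpha=\frac{1}{8\sqrt{d_{\mathrm{head}}}}$. Then the relevances obtained by applying the bilinear LRP rule to $f=OW_O$, to each $O_r=A_rV_r$, treating softmax as identity relevance propagation ($R(E_r)=R(A_r)$), applying the bilinear rule to $E_r=Q_rK_r^\top/\sqrt{d_{\mathrm{head}}}$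 and to $Q_r=XW_{Q,r}$, $K_r=XW_{K,r}$, $V_r=XW_{V,r}$ (summing the relevance of $X$ over all heads and all three projections) are $$R(W_O)=\tfrac12 W_O\odot[O^\top\Lambda_f],\quad R(W_{Q,r})=\alpha\,W_{Q,r}\odot[X^\top\Theta_{Q,r}],\quad R(W_{K,r})=\alpha\,W_{K,r}\odot[X^\top\Theta_{K,r}],\quad R(W_{V,r})=\tfrac14 W_{V,r}\odot[X^\top\Theta_{V,r}],$$ $$R(X)=X\odot\sum_{r=1}^{h}\Big[\alpha\,\Theta_{Q,r}W_{Q,r}^\top+\alpha\,\Theta_{K,r}W_{K,r}^\top+\tfrac14\Theta_{V,r}W_{V,r}^\top\Big],$$ and they satisfy $$\sum R(X)+\sum R(W_O)+\sum_{r=1}^{h}\Big[\sum R(W_{Q,r})+\sum R(W_{K,r})+\sum R(W_{V,r})\Big]=\sum R(f),$$ where $\sum$ denotes the sum of all entries.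
   Context: $\odot$ is element-wise product; all matrix divisions are element-wise; $[M]_r$ denotes the $r$-th column block (columns $(r-1)d_{\mathrm{head}}+1,\dots,rd_{\mathrm{head}}$) of a matrix $M$ with $d$ columns. Bilinear LRP rule for a bilinear expression $C_{ij}=\sum_a c\,P_{ia}W_{aj}$ (with constant $c$, plus possibly a bias) and output relevance $R(C)$: each product term receives $\frac{c\,P_{ia}W_{aj}}{C_{ij}}R(C)_{ij}$, split equally between its two factors; relevances of an entry are summed over all terms in which it appears. *)

theory Defs
  imports Complex_Main
begin

text \<open>Matrices are functions nat => nat => real, indexed from 0; dimensions are
  passed explicitly and only entries within range are meaningful.  Per-head
  families of matrices are indexed by the head r = 0..h-1 (paper: r = 1..h).\<close>

type_synonym mat = "nat \<Rightarrow> nat \<Rightarrow> real"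
type_synonym hmat = "nat \<Rightarrow> nat \<Rightarrow> nat \<Rightarrow> real"

definition mmul :: "nat \<Rightarrow> mat \<Rightarrow> mat \<Rightarrow> mat" where
  "mmul k P W = (\<lambda>i j. \<Sum>a<k. P i a * W a j)"

definition tr :: "mat \<Rightarrow> mat" where
  "tr M = (\<lambda>i j. M j i)"

definition softmax :: "nat \<Rightarrow> mat \<Rightarrow> mat" where
  "softmax n E = (\<lambda>i j. exp (E i j) / (\<Sum>k<n. exp (E i k)))"

text \<open>Bilinear LRP rule for C i j = c * sum_a P i a * W a j (C given), output
  relevance RC: each term receives c P i a W a j / C i j * RC i j, split equally
  between its two factors; relevances summed over all terms containing the entry.
  lrp_left: relevance of P (n = number of columns of C);
  lrp_right: relevance of W (m = number of rows of C).\<close>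
definition lrp_left :: "real \<Rightarrow> nat \<Rightarrow> mat \<Rightarrow> mat \<Rightarrow> mat \<Rightarrow> mat \<Rightarrow> mat" where
  "lrp_left c n P W C RC = (\<lambda>i a. \<Sum>j<n. (c * P i a * W a j / C i j) * RC i j / 2)"

definition lrp_right :: "real \<Rightarrow> nat \<Rightarrow> mat \<Rightarrow> mat \<Rightarrow> mat \<Rightarrow> mat \<Rightarrow> mat" where
  "lrp_right c m P W C RC = (\<lambda>a j. \<Sum>i<m. (c * P i a * W a j / C i j) * RC i j / 2)"

definition block :: "nat \<Rightarrow> mat \<Rightarrow> nat \<Rightarrow> mat" where
  "block dh M r = (\<lambda>i j. M i (r * dh + j))"

definition concat_heads :: "nat \<Rightarrow> hmat \<Rightarrow> mat" where
  "concat_heads dh Os = (\<lambda>i j. Os (j div dh) i (j mod dh))"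

definition msum :: "nat \<Rightarrow> nat \<Rightarrow> mat \<Rightarrow> real" where
  "msum m n M = (\<Sum>i<m. \<Sum>j<n. M i j)"

definition mha_Q :: "nat \<Rightarrow> mat \<Rightarrow> hmat \<Rightarrow> hmat" where
  "mha_Q d X WQ r = mmul d X (WQ r)"

definition mha_E :: "nat \<Rightarrow> nat \<Rightarrow> mat \<Rightarrow> hmat \<Rightarrow> hmat \<Rightarrow> hmat" where
  "mha_E d dh X WQ WK r = (\<lambda>i j. mmul dh (mha_Q d X WQ r) (tr (mha_Q d X WK r)) i j / sqrt (real dh))"

definition mha_A :: "nat \<Rightarrow> nat \<Rightarrow> nat \<Rightarrow> mat \<Rightarrow> hmat \<Rightarrow> hmat \<Rightarrow> hmat" where
  "mha_A m d dh X WQ WK r = softmax m (mha_E d dh X WQ WK r)"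

definition mha_Oh :: "nat \<Rightarrow> nat \<Rightarrow> nat \<Rightarrow> mat \<Rightarrow> hmat \<Rightarrow> hmat \<Rightarrow> hmat \<Rightarrow> hmat" where
  "mha_Oh m d dh X WQ WK WV r = mmul m (mha_A m d dh X WQ WK r) (mha_Q d X WV r)"

definition mha_O :: "nat \<Rightarrow> nat \<Rightarrow> nat \<Rightarrow> mat \<Rightarrow> hmat \<Rightarrow> hmat \<Rightarrow> hmat \<Rightarrow> mat" where
  "mha_O m d dh X WQ WK WV = concat_heads dh (mha_Oh m d dh X WQ WK WV)"

definition mha_f :: "nat \<Rightarrow> nat \<Rightarrow> nat \<Rightarrow> mat \<Rightarrow> hmat \<Rightarrow> hmat \<Rightarrow> hmat \<Rightarrow> mat \<Rightarrow> mat" where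
  "mha_f m d dh X WQ WK WV WO = mmul d (mha_O m d dh X WQ WK WV) WO"

definition lrp_O :: "nat \<Rightarrow> nat \<Rightarrow> nat \<Rightarrow> mat \<Rightarrow> hmat \<Rightarrow> hmat \<Rightarrow> hmat \<Rightarrow> mat \<Rightarrow> mat \<Rightarrow> mat" where
  "lrp_O m d dh X WQ WK WV WO Rf =
     lrp_left 1 d (mha_O m d dh X WQ WK WV) WO (mha_f m d dh X WQ WK WV WO) Rf"

definition lrp_WO :: "nat \<Rightarrow> nat \<Rightarrow> nat \<Rightarrow> mat \<Rightarrow> hmat \<Rightarrow> hmat \<Rightarrow> hmat \<Rightarrow> mat \<Rightarrow> mat \<Rightarrow> mat" where
  "lrp_WO m d dh X WQ WK WV WO Rf =
     lrp_right 1 m (mha_O m d dh X WQ WK WV) WO (mha_f m d dh X WQ WK WV WO) Rf"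

definition lrp_Oh :: "nat \<Rightarrow> nat \<Rightarrow> nat \<Rightarrow> mat \<Rightarrow> hmat \<Rightarrow> hmat \<Rightarrow> hmat \<Rightarrow> mat \<Rightarrow> mat \<Rightarrow> hmat" where
  "lrp_Oh m d dh X WQ WK WV WO Rf r = block dh (lrp_O m d dh X WQ WK WV WO Rf) r"

definition lrp_A :: "nat \<Rightarrow> nat \<Rightarrow> nat \<Rightarrow> mat \<Rightarrow> hmat \<Rightarrow> hmat \<Rightarrow> hmat \<Rightarrow> mat \<Rightarrow> mat \<Rightarrow> hmat" where
  "lrp_A m d dh X WQ WK WV WO Rf r =
     lrp_left 1 dh (mha_A m d dh X WQ WK r) (mha_Q d X WV r) (mha_Oh m d dh X WQ WK WV r)
       (lrp_Oh m d dh X WQ WK WV WO Rf r)"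

definition lrp_V :: "nat \<Rightarrow> nat \<Rightarrow> nat \<Rightarrow> mat \<Rightarrow> hmat \<Rightarrow> hmat \<Rightarrow> hmat \<Rightarrow> mat \<Rightarrow> mat \<Rightarrow> hmat" where
  "lrp_V m d dh X WQ WK WV WO Rf r =
     lrp_right 1 m (mha_A m d dh X WQ WK r) (mha_Q d X WV r) (mha_Oh m d dh X WQ WK WV r)
       (lrp_Oh m d dh X WQ WK WV WO Rf r)"

definition lrp_E :: "nat \<Rightarrow> nat \<Rightarrow> nat \<Rightarrow> mat \<Rightarrow> hmat \<Rightarrow> hmat \<Rightarrow> hmat \<Rightarrow> mat \<Rightarrow> mat \<Rightarrow> hmat" where
  "lrp_E m d dh X WQ WK WV WO Rf r = lrp_A m d dh X WQ WK WV WO Rf r"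

text \<open>R(Q_r), R(K_r) from E_r = (1/sqrt dh) Q_r K_r^T (R(K_r) is the transpose of
  the relevance of the right factor K_r^T).\<close>
definition lrp_Q :: "nat \<Rightarrow> nat \<Rightarrow> nat \<Rightarrow> mat \<Rightarrow> hmat \<Rightarrow> hmat \<Rightarrow> hmat \<Rightarrow> mat \<Rightarrow> mat \<Rightarrow> hmat" where
  "lrp_Q m d dh X WQ WK WV WO Rf r =
     lrp_left (1 / sqrt (real dh)) m (mha_Q d X WQ r) (tr (mha_Q d X WK r))
       (mha_E d dh X WQ WK r) (lrp_E m d dh X WQ WK WV WO Rf r)"

definition lrp_K :: "nat \<Rightarrow> nat \<Rightarrow> nat \<Rightarrow> mat \<Rightarrow> hmat \<Rightarrow> hmat \<Rightarrow> hmat \<Rightarrow> mat \<Rightarrow> mat \<Rightarrow> hmat" where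
  "lrp_K m d dh X WQ WK WV WO Rf r =
     tr (lrp_right (1 / sqrt (real dh)) m (mha_Q d X WQ r) (tr (mha_Q d X WK r))
       (mha_E d dh X WQ WK r) (lrp_E m d dh X WQ WK WV WO Rf r))"

definition lrp_WQ :: "nat \<Rightarrow> nat \<Rightarrow> nat \<Rightarrow> mat \<Rightarrow> hmat \<Rightarrow> hmat \<Rightarrow> hmat \<Rightarrow> mat \<Rightarrow> mat \<Rightarrow> hmat" where
  "lrp_WQ m d dh X WQ WK WV WO Rf r =
     lrp_right 1 m X (WQ r) (mha_Q d X WQ r) (lrp_Q m d dh X WQ WK WV WO Rf r)"

definition lrp_WK :: "nat \<Rightarrow> nat \<Rightarrow> nat \<Rightarrow> mat \<Rightarrow> hmat \<Rightarrow> hmat \<Rightarrow> hmat \<Rightarrow> mat \<Rightarrow> mat \<Rightarrow> hmat" where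
  "lrp_WK m d dh X WQ WK WV WO Rf r =
     lrp_right 1 m X (WK r) (mha_Q d X WK r) (lrp_K m d dh X WQ WK WV WO Rf r)"

definition lrp_WV :: "nat \<Rightarrow> nat \<Rightarrow> nat \<Rightarrow> mat \<Rightarrow> hmat \<Rightarrow> hmat \<Rightarrow> hmat \<Rightarrow> mat \<Rightarrow> mat \<Rightarrow> hmat" where
  "lrp_WV m d dh X WQ WK WV WO Rf r =
     lrp_right 1 m X (WV r) (mha_Q d X WV r) (lrp_V m d dh X WQ WK WV WO Rf r)"

definition lrp_X :: "nat \<Rightarrow> nat \<Rightarrow> nat \<Rightarrow> nat \<Rightarrow> mat \<Rightarrow> hmat \<Rightarrow> hmat \<Rightarrow> hmat \<Rightarrow> mat \<Rightarrow> mat \<Rightarrow> mat" where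
  "lrp_X h m d dh X WQ WK WV WO Rf = (\<lambda>i a. \<Sum>r<h.
       lrp_left 1 dh X (WQ r) (mha_Q d X WQ r) (lrp_Q m d dh X WQ WK WV WO Rf r) i a
     + lrp_left 1 dh X (WK r) (mha_Q d X WK r) (lrp_K m d dh X WQ WK WV WO Rf r) i a
     + lrp_left 1 dh X (WV r) (mha_Q d X WV r) (lrp_V m d dh X WQ WK WV WO Rf r) i a)"

end

theory Submission
  imports Defs
begin

text \<open>For a product C = c P W the bilinear rule has a closed form:
  R(P) = (c/2) P \<odot> (\<Lambda> W^T) and R(W) = (c/2) W \<odot> (P^T \<Lambda>) with \<Lambda> = R(C)/C; and if no
  entry of C vanishes, each factor receives exactly half of the total relevance of C.
  Going backwards through the network, each ratio R/output is a multiple of a matrix built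
  from the forward pass: R(O_r)/O_r = \<Lambda>_{O,r}, R(E_r)/E_r = \<Phi>_r/2, then
  R(Q_r)/Q_r = \<Theta>_{Q,r}/(4 sqrt dh), R(K_r)/K_r = \<Theta>_{K,r}/(4 sqrt dh), R(V_r)/V_r = \<Theta>_{V,r}/2,
  and one last bilinear step gives the factors \<alpha> and 1/4.  Conservation telescopes layer
  by layer, the relevance of O splitting over the column blocks of the heads.\<close>

lemma tr_tr [simp]: "tr (tr M) = M"
  by (simp add: tr_def)

lemma tr_mmul: "tr (mmul k P W) = mmul k (tr W) (tr P)"
  by (simp add: tr_def mmul_def mult.commute)

lemma lrp_left_ratio:
  assumes "\<And>j. j < n \<Longrightarrow> RC i j / C i j = k * T i j"
  shows "lrp_left c n P W C RC i a = c * k / 2 * P i a * mmul n T (tr W) i a"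
proof -
  have "lrp_left c n P W C RC i a = (\<Sum>j<n. c / 2 * P i a * (W a j * (RC i j / C i j)))"
    unfolding lrp_left_def by (intro sum.cong refl) (simp add: field_simps)
  also have "\<dots> = (\<Sum>j<n. c * k / 2 * P i a * (T i j * W a j))"
    using assms by (intro sum.cong refl) simp
  finally show ?thesis
    by (simp add: mmul_def tr_def sum_distrib_left)
qed

lemma lrp_right_ratio:
  assumes "\<And>i. i < m \<Longrightarrow> RC i j / C i j = k * T i j"
  shows "lrp_right c m P W C RC a j = c * k / 2 * W a j * mmul m (tr P) T a j"
proof -
  have "lrp_right c m P W C RC a j = (\<Sum>i<m. c / 2 * W a j * (P i a * (RC i j / C i j)))"
    unfolding lrp_right_def by (intro sum.cong refl) (simp add: field_simps)
  also have "\<dots> = (\<Sum>i<m. c * k / 2 * W a j * (P i a * T i j))"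
    using assms by (intro sum.cong refl) simp
  finally show ?thesis
    by (simp add: mmul_def tr_def sum_distrib_left)
qed

lemma lrp_left_eq:
  "lrp_left c n P W C RC i a = c / 2 * P i a * mmul n (\<lambda>i j. RC i j / C i j) (tr W) i a"
  using lrp_left_ratio[of n RC i C 1 "\<lambda>i j. RC i j / C i j"] by simp

lemma lrp_right_eq:
  "lrp_right c m P W C RC a j = c / 2 * W a j * mmul m (tr P) (\<lambda>i j. RC i j / C i j) a j"
  using lrp_right_ratio[of m RC j C 1 "\<lambda>i j. RC i j / C i j"] by simp

lemma msum_swap: "msum m n (tr M) = msum n m M"
  unfolding msum_def tr_def by (rule sum.swap)

lemma msum_lrp_left:
  assumes "\<And>i j. i < m \<Longrightarrow> j < n \<Longrightarrow> C i j = c * mmul k P W i j"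
    and "\<And>i j. i < m \<Longrightarrow> j < n \<Longrightarrow> C i j \<noteq> 0"
  shows "msum m k (lrp_left c n P W C RC) = msum m n RC / 2"
proof -
  have term_sum: "(\<Sum>a<k. c * P i a * W a j / C i j * RC i j / 2) = RC i j / 2"
    if "i < m" "j < n" for i j
  proof -
    have "(\<Sum>a<k. c * P i a * W a j / C i j * RC i j / 2) = c * mmul k P W i j / C i j * RC i j / 2"
      by (simp add: mmul_def sum_distrib_left sum_distrib_right sum_divide_distrib mult.assoc)
    with assms that show ?thesis by simp
  qed
  have "msum m k (lrp_left c n P W C RC) = (\<Sum>i<m. \<Sum>j<n. \<Sum>a<k. c * P i a * W a j / C i j * RC i j / 2)"
    unfolding msum_def lrp_left_def by (intro sum.cong refl sum.swap)
  also have "\<dots> = (\<Sum>i<m. \<Sum>j<n. RC i j / 2)"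
    by (intro sum.cong refl term_sum) auto
  finally show ?thesis
    by (simp add: msum_def sum_divide_distrib)
qed

lemma msum_lrp_right:
  assumes "\<And>i j. i < m \<Longrightarrow> j < n \<Longrightarrow> C i j = c * mmul k P W i j"
    and "\<And>i j. i < m \<Longrightarrow> j < n \<Longrightarrow> C i j \<noteq> 0"
  shows "msum k n (lrp_right c m P W C RC) = msum m n RC / 2"
proof -
  have "msum k n (lrp_right c m P W C RC) = msum m k (lrp_left c n P W C RC)"
    unfolding msum_def lrp_right_def lrp_left_def
    by (subst sum.swap) (intro sum.cong refl sum.swap)
  with msum_lrp_left[OF assms] show ?thesis by simp
qed

lemma msum_lrp_conservation:
  assumes "\<And>i j. i < m \<Longrightarrow> j < n \<Longrightarrow> C i j = c * mmul k P W i j"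
    and "\<And>i j. i < m \<Longrightarrow> j < n \<Longrightarrow> C i j \<noteq> 0"
  shows "msum m k (lrp_left c n P W C RC) + msum k n (lrp_right c m P W C RC) = msum m n RC"
  using msum_lrp_left[of m n C c k P W RC] msum_lrp_right[of m n C c k P W RC] assms by simp

lemma msum_sum: "msum m n (\<lambda>i j. \<Sum>r<h. F r i j) = (\<Sum>r<h. msum m n (F r))"
  unfolding msum_def by (subst sum.swap) (intro sum.cong refl sum.swap)

lemma msum_add: "msum m n (\<lambda>i j. F i j + G i j) = msum m n F + msum m n G"
  unfolding msum_def by (simp add: sum.distrib)

lemma msum_block: "msum m (h * dh) M = (\<Sum>r<h. msum m dh (block dh M r))"
proof -
  have shift: "sum (M i) {r * dh..<r * dh + dh} = (\<Sum>j<dh. M i (r * dh + j))" for i r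
    using sum.shift_bounds_nat_ivl[of "M i" 0 "r * dh" dh]
    by (simp add: lessThan_atLeast0 add.commute)
  have row: "(\<Sum>j<h * dh. M i j) = (\<Sum>r<h. \<Sum>j<dh. M i (r * dh + j))" for i
    by (simp add: sum.nat_group[symmetric] shift)
  show ?thesis
    unfolding msum_def block_def row by (rule sum.swap)
qed

lemma block_concat_heads: "j < dh \<Longrightarrow> block dh (concat_heads dh Os) r i j = Os r i j"
  by (simp add: block_def concat_heads_def)

locale mha_lrp =
  fixes m d dh h :: nat
    and X WO Rf :: mat
    and WQ WK WV :: hmat
begin

abbreviation "Q \<equiv> mha_Q d X WQ"
abbreviation "K \<equiv> mha_Q d X WK"
abbreviation "V \<equiv> mha_Q d X WV"
abbreviation "E \<equiv> mha_E d dh X WQ WK"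
abbreviation "A \<equiv> mha_A m d dh X WQ WK"
abbreviation "Oh \<equiv> mha_Oh m d dh X WQ WK WV"
abbreviation "Ocat \<equiv> mha_O m d dh X WQ WK WV"
abbreviation "f \<equiv> mha_f m d dh X WQ WK WV WO"

abbreviation "RO \<equiv> lrp_O m d dh X WQ WK WV WO Rf"
abbreviation "ROh \<equiv> lrp_Oh m d dh X WQ WK WV WO Rf"
abbreviation "RA \<equiv> lrp_A m d dh X WQ WK WV WO Rf"
abbreviation "RV \<equiv> lrp_V m d dh X WQ WK WV WO Rf"
abbreviation "RQ \<equiv> lrp_Q m d dh X WQ WK WV WO Rf"
abbreviation "RK \<equiv> lrp_K m d dh X WQ WK WV WO Rf"
abbreviation "RWO \<equiv> lrp_WO m d dh X WQ WK WV WO Rf"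
abbreviation "RWQ \<equiv> lrp_WQ m d dh X WQ WK WV WO Rf"
abbreviation "RWK \<equiv> lrp_WK m d dh X WQ WK WV WO Rf"
abbreviation "RWV \<equiv> lrp_WV m d dh X WQ WK WV WO Rf"
abbreviation RXQ :: "nat \<Rightarrow> mat" where "RXQ r \<equiv> lrp_left 1 dh X (WQ r) (Q r) (RQ r)"
abbreviation RXK :: "nat \<Rightarrow> mat" where "RXK r \<equiv> lrp_left 1 dh X (WK r) (K r) (RK r)"
abbreviation RXV :: "nat \<Rightarrow> mat" where "RXV r \<equiv> lrp_left 1 dh X (WV r) (V r) (RV r)"
abbreviation "RX \<equiv> lrp_X h m d dh X WQ WK WV WO Rf"

abbreviation "Lf \<equiv> \<lambda>i j. Rf i j / f i j"
abbreviation LO :: "nat \<Rightarrow> mat" where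
  "LO r \<equiv> \<lambda>i j. block dh (\<lambda>i j. 1/2 * Ocat i j * mmul d Lf (tr WO) i j) r i j / Oh r i j"
abbreviation "alpha \<equiv> 1 / (8 * sqrt (real dh))"
abbreviation Phi :: "nat \<Rightarrow> mat" where
  "Phi r \<equiv> \<lambda>i j. A r i j * mmul dh (LO r) (tr (V r)) i j / E r i j"
abbreviation ThQ :: "nat \<Rightarrow> mat" where "ThQ r \<equiv> mmul m (Phi r) (K r)"
abbreviation ThK :: "nat \<Rightarrow> mat" where "ThK r \<equiv> mmul m (tr (Phi r)) (Q r)"
abbreviation ThV :: "nat \<Rightarrow> mat" where "ThV r \<equiv> mmul m (tr (A r)) (LO r)"

lemma lrp_O_eq: "RO i j = 1/2 * Ocat i j * mmul d Lf (tr WO) i j"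
  unfolding lrp_O_def lrp_left_eq by simp

lemma lrp_WO_eq: "RWO a j = 1/2 * WO a j * mmul m (tr Ocat) Lf a j"
  unfolding lrp_WO_def lrp_right_eq by simp

lemma lrp_Oh_ratio: "ROh r i j / Oh r i j = LO r i j"
  by (simp add: lrp_Oh_def block_def lrp_O_eq)

lemma lrp_A_ratio: "RA r i k / E r i k = 1/2 * Phi r i k"
  unfolding lrp_A_def lrp_left_eq by (simp add: lrp_Oh_ratio)

lemma lrp_Q_eq: "RQ r i a = 1 / (4 * sqrt (real dh)) * Q r i a * ThQ r i a"
proof -
  have "RQ r i a = 1 / sqrt (real dh) * (1/2) / 2 * Q r i a * mmul m (Phi r) (tr (tr (K r))) i a"
    unfolding lrp_Q_def lrp_E_def by (rule lrp_left_ratio) (rule lrp_A_ratio)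
  then show ?thesis by simp
qed

lemma lrp_K_eq: "RK r j a = 1 / (4 * sqrt (real dh)) * K r j a * ThK r j a"
proof -
  have "RK r j a = 1 / sqrt (real dh) * (1/2) / 2 * tr (K r) a j * mmul m (tr (Q r)) (Phi r) a j"
    unfolding lrp_K_def lrp_E_def tr_def[of "lrp_right _ _ _ _ _ _"]
    by (rule lrp_right_ratio) (rule lrp_A_ratio)
  also have "mmul m (tr (Q r)) (Phi r) = tr (ThK r)"
    by (simp add: tr_mmul)
  finally show ?thesis by (simp add: tr_def)
qed

lemma lrp_V_eq: "RV r k j = 1/2 * V r k j * ThV r k j"
  unfolding lrp_V_def lrp_right_eq by (simp add: lrp_Oh_ratio)

lemma lrp_WQ_eq:
  assumes "\<forall>i<m. Q r i j \<noteq> 0"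
  shows "RWQ r a j = alpha * WQ r a j * mmul m (tr X) (ThQ r) a j"
proof -
  have "RWQ r a j = 1 * (1 / (4 * sqrt (real dh))) / 2 * WQ r a j * mmul m (tr X) (ThQ r) a j"
    unfolding lrp_WQ_def by (rule lrp_right_ratio) (simp add: lrp_Q_eq assms)
  then show ?thesis by simp
qed

lemma lrp_WK_eq:
  assumes "\<forall>i<m. K r i j \<noteq> 0"
  shows "RWK r a j = alpha * WK r a j * mmul m (tr X) (ThK r) a j"
proof -
  have "RWK r a j = 1 * (1 / (4 * sqrt (real dh))) / 2 * WK r a j * mmul m (tr X) (ThK r) a j"
    unfolding lrp_WK_def by (rule lrp_right_ratio) (simp add: lrp_K_eq assms)
  then show ?thesis by simp
qed

lemma lrp_WV_eq:
  assumes "\<forall>i<m. V r i j \<noteq> 0"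
  shows "RWV r a j = 1/4 * WV r a j * mmul m (tr X) (ThV r) a j"
proof -
  have "RWV r a j = 1 * (1/2) / 2 * WV r a j * mmul m (tr X) (ThV r) a j"
    unfolding lrp_WV_def by (rule lrp_right_ratio) (simp add: lrp_V_eq assms)
  then show ?thesis by simp
qed

lemma lrp_X_eq:
  assumes "\<forall>r<h. \<forall>j<dh. Q r i j \<noteq> 0 \<and> K r i j \<noteq> 0 \<and> V r i j \<noteq> 0"
  shows "RX i a = X i a * (\<Sum>r<h.
              alpha * mmul dh (ThQ r) (tr (WQ r)) i a
            + alpha * mmul dh (ThK r) (tr (WK r)) i a
            + 1/4 * mmul dh (ThV r) (tr (WV r)) i a)"
proof -
  have head: "RXQ r i a + RXK r i a + RXV r i a = X i a * (
              alpha * mmul dh (ThQ r) (tr (WQ r)) i a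
            + alpha * mmul dh (ThK r) (tr (WK r)) i a
            + 1/4 * mmul dh (ThV r) (tr (WV r)) i a)" if "r < h" for r
  proof -
    have "RXQ r i a = 1 * (1 / (4 * sqrt (real dh))) / 2 * X i a * mmul dh (ThQ r) (tr (WQ r)) i a"
      by (rule lrp_left_ratio) (use assms that in \<open>simp add: lrp_Q_eq\<close>)
    moreover have "RXK r i a = 1 * (1 / (4 * sqrt (real dh))) / 2 * X i a * mmul dh (ThK r) (tr (WK r)) i a"
      by (rule lrp_left_ratio) (use assms that in \<open>simp add: lrp_K_eq\<close>)
    moreover have "RXV r i a = 1 * (1/2) / 2 * X i a * mmul dh (ThV r) (tr (WV r)) i a"
      by (rule lrp_left_ratio) (use assms that in \<open>simp add: lrp_V_eq\<close>)
    ultimately show ?thesis by (simp add: algebra_simps)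
  qed
  show ?thesis
    unfolding lrp_X_def sum_distrib_left by (intro sum.cong refl) (simp add: head)
qed

lemma msum_lrp_head:
  assumes "\<forall>i<m. \<forall>j<dh. Oh r i j \<noteq> 0"
    and "\<forall>i<m. \<forall>j<m. E r i j \<noteq> 0"
    and "\<forall>i<m. \<forall>j<dh. Q r i j \<noteq> 0 \<and> K r i j \<noteq> 0 \<and> V r i j \<noteq> 0"
  shows "msum m dh (ROh r) = msum m d (RXQ r) + msum m d (RXK r) + msum m d (RXV r)
           + (msum d dh (RWQ r) + msum d dh (RWK r) + msum d dh (RWV r))"
proof -
  have Oh_layer: "msum m m (RA r) + msum m dh (RV r) = msum m dh (ROh r)"
    unfolding lrp_A_def lrp_V_def
    by (rule msum_lrp_conservation) (use assms in \<open>simp_all add: mha_Oh_def\<close>)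
  have E_layer: "msum m dh (RQ r) + msum m dh (RK r) = msum m m (RA r)"
    \<comment> \<open>R(K_r) is stored as the transpose of the relevance of the right factor K_r^T\<close>
    unfolding lrp_Q_def lrp_K_def lrp_E_def msum_swap
    by (rule msum_lrp_conservation) (use assms in \<open>simp_all add: mha_E_def\<close>)
  have Q_layer: "msum m d (RXQ r) + msum d dh (RWQ r) = msum m dh (RQ r)"
    unfolding lrp_WQ_def
    by (rule msum_lrp_conservation) (use assms in \<open>simp_all add: mha_Q_def\<close>)
  have K_layer: "msum m d (RXK r) + msum d dh (RWK r) = msum m dh (RK r)"
    unfolding lrp_WK_def
    by (rule msum_lrp_conservation) (use assms in \<open>simp_all add: mha_Q_def\<close>)
  have V_layer: "msum m d (RXV r) + msum d dh (RWV r) = msum m dh (RV r)"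
    unfolding lrp_WV_def
    by (rule msum_lrp_conservation) (use assms in \<open>simp_all add: mha_Q_def\<close>)
  from Oh_layer E_layer Q_layer K_layer V_layer show ?thesis by linarith
qed

lemma relevance_conservation:
  assumes "d = h * dh"
    and "\<forall>i<m. \<forall>j<d. f i j \<noteq> 0"
    and "\<forall>i<m. \<forall>j<d. Ocat i j \<noteq> 0"
    and "\<forall>r<h. \<forall>i<m. \<forall>j<m. E r i j \<noteq> 0"
    and "\<forall>r<h. \<forall>i<m. \<forall>j<dh. Q r i j \<noteq> 0 \<and> K r i j \<noteq> 0 \<and> V r i j \<noteq> 0"
  shows "msum m d RX + msum d d RWO
           + (\<Sum>r<h. msum d dh (RWQ r) + msum d dh (RWK r) + msum d dh (RWV r))
         = msum m d Rf"
proof -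
  have Oh_nonzero: "\<forall>i<m. \<forall>j<dh. Oh r i j \<noteq> 0" if "r < h" for r
  proof (intro allI impI)
    fix i j assume "i < m" "j < dh"
    have "r * dh + j < Suc r * dh" using \<open>j < dh\<close> by simp
    also have "\<dots> \<le> h * dh" using \<open>r < h\<close> by (intro mult_le_mono1) simp
    finally have "Ocat i (r * dh + j) \<noteq> 0" using assms(1,3) \<open>i < m\<close> by simp
    then show "Oh r i j \<noteq> 0"
      using block_concat_heads[OF \<open>j < dh\<close>, of Oh r i] by (simp add: mha_O_def block_def)
  qed
  have f_layer: "msum m d RO + msum d d RWO = msum m d Rf"
    unfolding lrp_O_def lrp_WO_def
    by (rule msum_lrp_conservation) (use assms(2) in \<open>simp_all add: mha_f_def\<close>)
  have "msum m d RO = (\<Sum>r<h. msum m dh (ROh r))"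
    using msum_block[of m h dh RO] assms(1) by (simp add: lrp_Oh_def)
  also have "\<dots> = (\<Sum>r<h. msum m d (RXQ r) + msum m d (RXK r) + msum m d (RXV r)
           + (msum d dh (RWQ r) + msum d dh (RWK r) + msum d dh (RWV r)))"
    by (intro sum.cong refl msum_lrp_head) (use assms Oh_nonzero in auto)
  also have "\<dots> = msum m d RX
           + (\<Sum>r<h. msum d dh (RWQ r) + msum d dh (RWK r) + msum d dh (RWV r))"
    unfolding lrp_X_def msum_sum msum_add sum.distrib ..
  finally show ?thesis using f_layer by linarith
qed

end

theorem proposition2:
  fixes m d dh h :: nat
    and X WO Rf :: mat
    and WQ WK WV :: hmat
  assumes dims: "0 < m" "0 < d" "0 < dh" "dh dvd d" "h = d div dh"
  defines "Q \<equiv> mha_Q d X WQ"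
    and "K \<equiv> mha_Q d X WK"
    and "V \<equiv> mha_Q d X WV"
    and "E \<equiv> mha_E d dh X WQ WK"
    and "A \<equiv> mha_A m d dh X WQ WK"
    and "Oh \<equiv> mha_Oh m d dh X WQ WK WV"
    and "Ocat \<equiv> mha_O m d dh X WQ WK WV"
    and "f \<equiv> mha_f m d dh X WQ WK WV WO"
  assumes nz_f: "\<forall>i<m. \<forall>j<d. f i j \<noteq> 0"
    and nz_O: "\<forall>i<m. \<forall>j<d. Ocat i j \<noteq> 0"
    and nz_E: "\<forall>r<h. \<forall>i<m. \<forall>j<m. E r i j \<noteq> 0"
    and nz_QKV: "\<forall>r<h. \<forall>i<m. \<forall>j<dh. Q r i j \<noteq> 0 \<and> K r i j \<noteq> 0 \<and> V r i j \<noteq> 0"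
  defines "RWO \<equiv> lrp_WO m d dh X WQ WK WV WO Rf"
    and "RWQ \<equiv> lrp_WQ m d dh X WQ WK WV WO Rf"
    and "RWK \<equiv> lrp_WK m d dh X WQ WK WV WO Rf"
    and "RWV \<equiv> lrp_WV m d dh X WQ WK WV WO Rf"
    and "RX \<equiv> lrp_X h m d dh X WQ WK WV WO Rf"
  shows "let Lf = (\<lambda>i j. Rf i j / f i j);
             LO = (\<lambda>r i j. block dh (\<lambda>i j. 1/2 * Ocat i j * mmul d Lf (tr WO) i j) r i j / Oh r i j);
             alpha = 1 / (8 * sqrt (real dh));
             Phi = (\<lambda>r i j. A r i j * mmul dh (LO r) (tr (V r)) i j / E r i j);
             ThQ = (\<lambda>r. mmul m (Phi r) (K r));
             ThK = (\<lambda>r. mmul m (tr (Phi r)) (Q r));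
             ThV = (\<lambda>r. mmul m (tr (A r)) (LO r))
         in (\<forall>a<d. \<forall>j<d. RWO a j = 1/2 * WO a j * mmul m (tr Ocat) Lf a j)
       \<and> (\<forall>r<h. \<forall>a<d. \<forall>j<dh.
             RWQ r a j = alpha * WQ r a j * mmul m (tr X) (ThQ r) a j
           \<and> RWK r a j = alpha * WK r a j * mmul m (tr X) (ThK r) a j
           \<and> RWV r a j = 1/4 * WV r a j * mmul m (tr X) (ThV r) a j)
       \<and> (\<forall>i<m. \<forall>a<d. RX i a = X i a * (\<Sum>r<h.
              alpha * mmul dh (ThQ r) (tr (WQ r)) i a
            + alpha * mmul dh (ThK r) (tr (WK r)) i a
            + 1/4 * mmul dh (ThV r) (tr (WV r)) i a))
       \<and> msum m d RX + msum d d RWO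
           + (\<Sum>r<h. msum d dh (RWQ r) + msum d dh (RWK r) + msum d dh (RWV r))
         = msum m d Rf"
proof -
  interpret mha_lrp m d dh h X WO Rf WQ WK WV .
  have d_eq: "d = h * dh" using dims by simp
  note nonzero = nz_f[unfolded f_def] nz_O[unfolded Ocat_def] nz_E[unfolded E_def]
    nz_QKV[unfolded Q_def K_def V_def]
  show ?thesis
    unfolding Let_def Q_def K_def V_def E_def A_def Oh_def Ocat_def f_def
      RWO_def RWQ_def RWK_def RWV_def RX_def
    using relevance_conservation[OF d_eq nonzero] nonzero(4)
    by (simp add: lrp_WO_eq lrp_WQ_eq lrp_WK_eq lrp_WV_eq lrp_X_eq)
qed

end
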